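(* Let $FAF=\langle\mathcal A,\rho\rangle$ be a fuzzy argumentation framework and $E\subseteq\mathcal A$. For every $C\subseteq\mathcal A$: $E\in\mathcal{AE}(FAF,C)$ if and only if for every $S\in SCCS_{FAF}$, $$E\cap S\in\mathcal{AE}\big(FAF\downarrow_{R_{FAF}(S,E)},\,D_{FAF}(S,E)\cap C\big).$$
   Context: Fuzzy sets: a fuzzy set on a crisp set $X$ is a map $S:X\to[0,1]$; $S\subseteq S'$ means $S(x)\le S'(x)$ for all $x$; $\cap,\cup$ are pointwise $\min,\max$; $\mathrm{Supp}(S)=\{x:S(x)>0\}$. A fuzzy point $(x,a)$, $a\in(0,1]$, has value $a$ at $x$ and $0$ elsewhere; $(x,a)\in S$ means $a\le S(x)$. $a*b=\min\{a,b\}$. A fuzzy argumentation framework (FAF) is $\langle\mathcal A,\rho\rangle$ with $\mathrm{Args}$ a crisp set, $\mathcal A$ a fuzzy set on $\mathrm{Args}$, $\rho:\mathrm{Args}\times\mathrm{Args}\to[0,1]$, $\rho_{AB}=\rho(A,B)$; $A$ attacks $B$ iff $\rho_{AB}>0$. Fuzzy arguments are fuzzy points $(A,a)\in\mathcal A$. An attack of $(A,a)$ on $(B,b)$ is tolerable if $\min\{a,\rho_{AB}\}+b\le1$, sufficient otherwise. $(A,a)$ weakens $(B,b)$ to $(B,b')$, $b'=\min\{1-\min\{a,\rho_{AB}\},b\}$. $T\subseteq\mathcal A$ weakening defends $(C,c)$ if for every fuzzy argument $(B,b)$ sufficiently attacking $(C,c)$ there is $(A',a')\in T$ weakening $(B,b)$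 to some $(B,b')$ which tolerably attacks $(C,c)$. $T$ is conflict-free if no $(A,a),(B,b)\in T$ with $(A,a)$ sufficiently attacking $(B,b)$; admissible if conflict-free and it weakening defends every element of $T$. For $C\subseteq\mathcal A$, $\mathcal{AE}(FAF,C)$ is the set of admissible $E$ with $E\subseteq C$. Path-equivalence on $\mathrm{Args}$: $A\sim B$ iff $A=B$ or there are chains of attacks from $A$ to $B$ and from $B$ to $A$. $SCC_{FAF}(A)$ is the fuzzy set with value $\mathcal A(B)$ at each $B\sim A$, $0$ elsewhere; $SCCS_{FAF}$ is the set of these strongly connected components. $outparents_{FAF}(S)$ is the fuzzy set of $(B,\mathcal A(B))$ with $B\notin\mathrm{Supp}(S)$ attacking some argument of $\mathrm{Supp}(S)$. For $T\subseteq\mathcal A$, $FAF\downarrow_T=\langle T,\rho|_{\mathrm{Supp}(T)\times\mathrm{Supp}(T)}\rangle$, and notions in $FAF\downarrow_T$ refer to its own fuzzy arguments and attacks. For $E\subseteq\mathcal A$, $S\in SCCS_{FAF}$: $L_{FAF}(S,E)(A)=\max_B\big((E\cap outparents_{FAF}(S))(B)*\rho_{BA}\big)$ for $A\in\mathrm{Supp}(S)$, $0$ elsewhere; $R_{FAF}(S,E)(A)=\min\{\mathcal A(A),1-L_{FAF}(S,E)(A)\}$ for $A\in\mathrm{Supp}(S)$, $0$ elsewhere; $D_{FAF}(S,E)$ is the union of fuzzy points $(A,a)\in R_{FAF}(S,E)$ such that for every $(B,b)\in outparents_{FAF}(S)$ sufficiently attacking $(A,a)$ there is $(C,c)\in E$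 weakening $(B,b)$ to some $(B,b')$ which tolerably attacks $(A,a)$. *)

theory Defs
  imports Main "HOL.Real"
begin

definition fuzzy_set :: "('a \<Rightarrow> real) \<Rightarrow> bool" where
  "fuzzy_set S \<longleftrightarrow> (\<forall>x. 0 \<le> S x \<and> S x \<le> 1)"

definition fsub :: "('a \<Rightarrow> real) \<Rightarrow> ('a \<Rightarrow> real) \<Rightarrow> bool" where
  "fsub S S' \<longleftrightarrow> (\<forall>x. S x \<le> S' x)"

definition finter :: "('a \<Rightarrow> real) \<Rightarrow> ('a \<Rightarrow> real) \<Rightarrow> 'a \<Rightarrow> real" where
  "finter S S' = (\<lambda>x. min (S x) (S' x))"

definition supp :: "('a \<Rightarrow> real) \<Rightarrow> 'a set" where
  "supp S = {x. S x > 0}"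

definition fpin :: "'a \<Rightarrow> real \<Rightarrow> ('a \<Rightarrow> real) \<Rightarrow> bool" where
  "fpin x a S \<longleftrightarrow> 0 < a \<and> a \<le> 1 \<and> a \<le> S x"

definition sufficient_attack :: "('a \<Rightarrow> 'a \<Rightarrow> real) \<Rightarrow> 'a \<Rightarrow> real \<Rightarrow> 'a \<Rightarrow> real \<Rightarrow> bool" where
  "sufficient_attack \<rho> A a B b \<longleftrightarrow> \<rho> A B > 0 \<and> min a (\<rho> A B) + b > 1"

definition tolerable_attack :: "('a \<Rightarrow> 'a \<Rightarrow> real) \<Rightarrow> 'a \<Rightarrow> real \<Rightarrow> 'a \<Rightarrow> real \<Rightarrow> bool" where
  "tolerable_attack \<rho> A a B b \<longleftrightarrow> \<rho> A B > 0 \<and> min a (\<rho> A B) + b \<le> 1"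

definition weaken :: "('a \<Rightarrow> 'a \<Rightarrow> real) \<Rightarrow> 'a \<Rightarrow> real \<Rightarrow> 'a \<Rightarrow> real \<Rightarrow> real" where
  "weaken \<rho> A a B b = min (1 - min a (\<rho> A B)) b"

definition wdefends :: "('a \<Rightarrow> real) \<Rightarrow> ('a \<Rightarrow> 'a \<Rightarrow> real) \<Rightarrow> ('a \<Rightarrow> real) \<Rightarrow> 'a \<Rightarrow> real \<Rightarrow> bool" where
  "wdefends Af \<rho> T C c \<longleftrightarrow>
     (\<forall>B b. fpin B b Af \<and> sufficient_attack \<rho> B b C c \<longrightarrow>
        (\<exists>A' a'. fpin A' a' T \<and> tolerable_attack \<rho> B (weaken \<rho> A' a' B b) C c))"

definition conflict_free :: "('a \<Rightarrow> 'a \<Rightarrow> real) \<Rightarrow> ('a \<Rightarrow> real) \<Rightarrow> bool" where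
  "conflict_free \<rho> T \<longleftrightarrow>
     (\<forall>A a B b. fpin A a T \<and> fpin B b T \<longrightarrow> \<not> sufficient_attack \<rho> A a B b)"

definition admissible :: "('a \<Rightarrow> real) \<Rightarrow> ('a \<Rightarrow> 'a \<Rightarrow> real) \<Rightarrow> ('a \<Rightarrow> real) \<Rightarrow> bool" where
  "admissible Af \<rho> T \<longleftrightarrow> fsub T Af \<and> conflict_free \<rho> T \<and>
     (\<forall>C c. fpin C c T \<longrightarrow> wdefends Af \<rho> T C c)"

definition AE :: "('a \<Rightarrow> real) \<Rightarrow> ('a \<Rightarrow> 'a \<Rightarrow> real) \<Rightarrow> ('a \<Rightarrow> real) \<Rightarrow> ('a \<Rightarrow> real) set" where
  "AE Af \<rho> C = {E. admissible Af \<rho> E \<and> fsub E C}"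

definition attack_rel :: "('a \<Rightarrow> 'a \<Rightarrow> real) \<Rightarrow> ('a \<times> 'a) set" where
  "attack_rel \<rho> = {(x, y). \<rho> x y > 0}"

definition path_equiv :: "('a \<Rightarrow> 'a \<Rightarrow> real) \<Rightarrow> 'a \<Rightarrow> 'a \<Rightarrow> bool" where
  "path_equiv \<rho> A B \<longleftrightarrow> A = B \<or> ((A, B) \<in> (attack_rel \<rho>)\<^sup>+ \<and> (B, A) \<in> (attack_rel \<rho>)\<^sup>+)"

definition SCC :: "('a \<Rightarrow> real) \<Rightarrow> ('a \<Rightarrow> 'a \<Rightarrow> real) \<Rightarrow> 'a \<Rightarrow> 'a \<Rightarrow> real" where
  "SCC Af \<rho> A = (\<lambda>B. if path_equiv \<rho> A B then Af B else 0)"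

definition SCCS :: "('a \<Rightarrow> real) \<Rightarrow> ('a \<Rightarrow> 'a \<Rightarrow> real) \<Rightarrow> ('a \<Rightarrow> real) set" where
  "SCCS Af \<rho> = range (SCC Af \<rho>)"

definition outparents :: "('a \<Rightarrow> real) \<Rightarrow> ('a \<Rightarrow> 'a \<Rightarrow> real) \<Rightarrow> ('a \<Rightarrow> real) \<Rightarrow> 'a \<Rightarrow> real" where
  "outparents Af \<rho> S = (\<lambda>B. if B \<notin> supp S \<and> (\<exists>A \<in> supp S. \<rho> B A > 0) then Af B else 0)"

text \<open>Restriction FAF\<down>T: fuzzy set T, attack relation restricted to Supp(T).\<close>
definition restrict_att :: "('a \<Rightarrow> 'a \<Rightarrow> real) \<Rightarrow> ('a \<Rightarrow> real) \<Rightarrow> 'a \<Rightarrow> 'a \<Rightarrow> real" where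
  "restrict_att \<rho> T = (\<lambda>x y. if x \<in> supp T \<and> y \<in> supp T then \<rho> x y else 0)"

definition L_FAF :: "('a::finite \<Rightarrow> real) \<Rightarrow> ('a \<Rightarrow> 'a \<Rightarrow> real) \<Rightarrow> ('a \<Rightarrow> real) \<Rightarrow> ('a \<Rightarrow> real) \<Rightarrow> 'a \<Rightarrow> real" where
  "L_FAF Af \<rho> S E = (\<lambda>A. if A \<in> supp S
      then Max (range (\<lambda>B. min (finter E (outparents Af \<rho> S) B) (\<rho> B A))) else 0)"

definition R_FAF :: "('a::finite \<Rightarrow> real) \<Rightarrow> ('a \<Rightarrow> 'a \<Rightarrow> real) \<Rightarrow> ('a \<Rightarrow> real) \<Rightarrow> ('a \<Rightarrow> real) \<Rightarrow> 'a \<Rightarrow> real" where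
  "R_FAF Af \<rho> S E = (\<lambda>A. if A \<in> supp S then min (Af A) (1 - L_FAF Af \<rho> S E A) else 0)"

definition D_cond :: "('a::finite \<Rightarrow> real) \<Rightarrow> ('a \<Rightarrow> 'a \<Rightarrow> real) \<Rightarrow> ('a \<Rightarrow> real) \<Rightarrow> ('a \<Rightarrow> real) \<Rightarrow> 'a \<Rightarrow> real \<Rightarrow> bool" where
  "D_cond Af \<rho> S E A a \<longleftrightarrow> fpin A a (R_FAF Af \<rho> S E) \<and>
     (\<forall>B b. fpin B b (outparents Af \<rho> S) \<and> sufficient_attack \<rho> B b A a \<longrightarrow>
        (\<exists>C c. fpin C c E \<and> tolerable_attack \<rho> B (weaken \<rho> C c B b) A a))"

definition D_FAF :: "('a::finite \<Rightarrow> real) \<Rightarrow> ('a \<Rightarrow> 'a \<Rightarrow> real) \<Rightarrow> ('a \<Rightarrow> real) \<Rightarrow> ('a \<Rightarrow> real) \<Rightarrow> 'a \<Rightarrow> real" where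
  "D_FAF Af \<rho> S E = (\<lambda>A. Sup (insert 0 {a. D_cond Af \<rho> S E A a}))"

end

theory Submission
  imports Defs
begin

(* An SCC S meets the rest of E only through its out-parents. Their strongest attacks by E cap
   every argument A of S at R(S,E)(A) = min(Af(A), 1 - L(S,E)(A)); hence a conflict-free E lies
   below R(S,E) on S, a member of E outside S can never weaken an argument of R(S,E), and an
   attacker from S whose degree exceeds R(S,E) is weakened to a tolerable attack by the very
   out-parent that caps it. Attacks by out-parents are the business of D(S,E): as there are
   finitely many arguments, the supremum defining D(S,E)(A) is attained, so every degree up to it
   is defended by E against them. *)

lemma fpin_supp: "fpin x a T \<Longrightarrow> x \<in> supp T"
  by (auto simp: fpin_def supp_def)

lemma fpin_fsub: "fpin x a T \<Longrightarrow> fsub T T' \<Longrightarrow> fpin x a T'"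
  by (auto simp: fpin_def fsub_def intro: order_trans)

lemma restrict_att_eq [simp]:
  "x \<in> supp T \<Longrightarrow> y \<in> supp T \<Longrightarrow> restrict_att \<rho> T x y = \<rho> x y"
  by (simp add: restrict_att_def)

lemma sufficient_attack_restrict_att:
  "sufficient_attack (restrict_att \<rho> T) A a B b \<longleftrightarrow>
     sufficient_attack \<rho> A a B b \<and> A \<in> supp T \<and> B \<in> supp T"
  by (auto simp: sufficient_attack_def restrict_att_def)

lemma sufficient_attack_mono:
  "sufficient_attack \<rho> A a B b' \<Longrightarrow> b' \<le> b \<Longrightarrow> sufficient_attack \<rho> A a B b"
  by (auto simp: sufficient_attack_def)

lemma tolerable_attack_antimono:
  "tolerable_attack \<rho> A a B b \<Longrightarrow> b' \<le> b \<Longrightarrow> tolerable_attack \<rho> A a B b'"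
  by (auto simp: tolerable_attack_def)

lemma sufficient_attack_not_tolerable:
  "sufficient_attack \<rho> A a B b \<Longrightarrow> \<not> tolerable_attack \<rho> A a B b"
  by (simp add: sufficient_attack_def tolerable_attack_def)

lemma tolerable_attack_weaken_mono:
  assumes "tolerable_attack \<rho> B (weaken \<rho> A a B b') C c"
    and "sufficient_attack \<rho> B b' C c" and "b' \<le> b"
  shows "tolerable_attack \<rho> B (weaken \<rho> A a B b) C c"
  using assms by (auto simp: tolerable_attack_def sufficient_attack_def weaken_def)

lemma conflict_free_restrict_att:
  assumes "conflict_free \<rho> T" and "fsub T' T"
  shows "conflict_free (restrict_att \<rho> R) T'"
  using assms unfolding conflict_free_def sufficient_attack_restrict_att
  by (meson fpin_fsub)

definition crisp_restriction :: "('a \<Rightarrow> real) \<Rightarrow> ('a \<Rightarrow> real) \<Rightarrow> bool" where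
  "crisp_restriction Af S \<longleftrightarrow> (\<forall>x. S x = 0 \<or> S x = Af x)"

lemma crisp_restriction_SCC: "crisp_restriction Af (SCC Af \<rho> A)"
  by (simp add: crisp_restriction_def SCC_def)

lemma mem_supp_SCC_self: "0 < Af A \<Longrightarrow> A \<in> supp (SCC Af \<rho> A)"
  by (simp add: SCC_def supp_def path_equiv_def)

lemma L_FAF_attained:
  fixes S :: "'a::finite \<Rightarrow> real"
  assumes "A \<in> supp S"
  shows "\<exists>B. L_FAF Af \<rho> S E A = min (finter E (outparents Af \<rho> S) B) (\<rho> B A)"
proof -
  let ?f = "\<lambda>B. min (finter E (outparents Af \<rho> S) B) (\<rho> B A)"
  have "Max (range ?f) \<in> range ?f" by (rule Max_in) auto
  then obtain B where "Max (range ?f) = ?f B" by blast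
  then show ?thesis using assms unfolding L_FAF_def by (intro exI[of _ B]) simp
qed

lemma L_FAF_ge:
  fixes S :: "'a::finite \<Rightarrow> real"
  assumes "A \<in> supp S"
  shows "min (finter E (outparents Af \<rho> S) B) (\<rho> B A) \<le> L_FAF Af \<rho> S E A"
proof -
  let ?f = "\<lambda>B. min (finter E (outparents Af \<rho> S) B) (\<rho> B A)"
  have "?f B \<le> Max (range ?f)" by (rule Max_ge) auto
  then show ?thesis using assms unfolding L_FAF_def by (simp only: if_True)
qed

lemma supp_R_FAF: "supp (R_FAF Af \<rho> S E) \<subseteq> supp S"
  by (auto simp: R_FAF_def supp_def split: if_splits)

lemma bdd_above_D_cond: "bdd_above (insert 0 {a. D_cond Af \<rho> S E A a})"
  by (rule bdd_aboveI[of _ 1]) (auto simp: D_cond_def fpin_def)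

lemma D_FAF_nonneg: "0 \<le> D_FAF Af \<rho> S E A"
  unfolding D_FAF_def by (simp add: cSup_upper[OF _ bdd_above_D_cond])

lemma D_cond_le_D_FAF: "D_cond Af \<rho> S E A a \<Longrightarrow> a \<le> D_FAF Af \<rho> S E A"
  unfolding D_FAF_def by (simp add: cSup_upper[OF _ bdd_above_D_cond])

lemma D_cond_antimono:
  assumes D: "D_cond Af \<rho> S E A a" and "0 < a'" and "a' \<le> a"
  shows "D_cond Af \<rho> S E A a'"
proof -
  have "fpin A a' (R_FAF Af \<rho> S E)"
    using assms by (auto simp: D_cond_def fpin_def)
  moreover have "\<exists>C c. fpin C c E \<and> tolerable_attack \<rho> B (weaken \<rho> C c B b) A a'"
    if B: "fpin B b (outparents Af \<rho> S)" and att: "sufficient_attack \<rho> B b A a'" for B b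
  proof -
    have "sufficient_attack \<rho> B b A a"
      using sufficient_attack_mono[OF att \<open>a' \<le> a\<close>] .
    then obtain C c where C: "fpin C c E" "tolerable_attack \<rho> B (weaken \<rho> C c B b) A a"
      using D B unfolding D_cond_def by blast
    then show ?thesis
      using tolerable_attack_antimono[OF C(2) \<open>a' \<le> a\<close>] by blast
  qed
  ultimately show ?thesis by (simp add: D_cond_def)
qed

lemma D_cond_D_FAF:
  fixes E :: "'a::finite \<Rightarrow> real"
  assumes E: "fuzzy_set E" and pos: "0 < D_FAF Af \<rho> S E A"
  shows "D_cond Af \<rho> S E A (D_FAF Af \<rho> S E A)"
proof -
  let ?d = "D_FAF Af \<rho> S E A"
  have approx: "\<exists>a. D_cond Af \<rho> S E A a \<and> t < a" if "t < ?d" "0 \<le> t" for t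
    using that less_cSup_iff[OF _ bdd_above_D_cond[of Af \<rho> S E A], of t] unfolding D_FAF_def by auto
  obtain a0 where "D_cond Af \<rho> S E A a0" using approx[of 0] pos by blast
  then have "0 \<le> R_FAF Af \<rho> S E A"
    by (auto simp: D_cond_def fpin_def)
  then have "?d \<le> R_FAF Af \<rho> S E A" "?d \<le> 1"
    unfolding D_FAF_def by (auto intro!: cSup_least simp: D_cond_def fpin_def)
  then have in_R: "fpin A ?d (R_FAF Af \<rho> S E)"
    using pos by (simp add: fpin_def)
  have "\<exists>C c. fpin C c E \<and> tolerable_attack \<rho> B (weaken \<rho> C c B b) A ?d"
    if B: "fpin B b (outparents Af \<rho> S)" and att: "sufficient_attack \<rho> B b A ?d" for B b
  proof (rule ccontr)
    assume none: "\<not> ?thesis"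
    let ?g = "\<lambda>C. min (weaken \<rho> C (E C) B b) (\<rho> B A)"
    have exceeds: "1 - ?g C < ?d" if "0 < E C" for C
    proof -
      have "fpin C (E C) E" using that E by (auto simp: fpin_def fuzzy_set_def)
      then have "\<not> tolerable_attack \<rho> B (weaken \<rho> C (E C) B b) A ?d"
        using none by blast
      then show ?thesis using att by (simp add: tolerable_attack_def sufficient_attack_def)
    qed
    \<comment> \<open>there are finitely many defenders, so some degree of the D-set lies above all their
      thresholds at once\<close>
    define T where "T = insert (1 - min b (\<rho> B A)) ((\<lambda>C. 1 - ?g C) ` {C. 0 < E C})"
    have "finite T" by (simp add: T_def)
    have "1 - min b (\<rho> B A) \<le> Max T"
      using \<open>finite T\<close> by (simp add: T_def)
    moreover have "0 \<le> 1 - min b (\<rho> B A)"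
      using B by (auto simp: fpin_def)
    moreover have "Max T < ?d"
      using \<open>finite T\<close> exceeds att
      by (auto simp: T_def sufficient_attack_def)
    ultimately obtain a where a: "D_cond Af \<rho> S E A a" "Max T < a"
      using approx by (meson order_trans)
    have "sufficient_attack \<rho> B b A a"
      using att a(2) Max.coboundedI[OF \<open>finite T\<close>, of "1 - min b (\<rho> B A)"]
      by (auto simp: T_def sufficient_attack_def)
    then obtain C c where C: "fpin C c E" "tolerable_attack \<rho> B (weaken \<rho> C c B b) A a"
      using a(1) B unfolding D_cond_def by blast
    have "?g C + a \<le> 1"
      using C by (auto simp: fpin_def weaken_def tolerable_attack_def)
    moreover have "1 - ?g C \<le> Max T"
      using C(1) \<open>finite T\<close> by (auto simp: T_def fpin_def intro!: Max.coboundedI)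
    ultimately show False using a(2) by linarith
  qed
  with in_R show ?thesis by (simp add: D_cond_def)
qed

lemma D_cond_iff:
  fixes E :: "'a::finite \<Rightarrow> real"
  assumes "fuzzy_set E"
  shows "D_cond Af \<rho> S E A a \<longleftrightarrow> 0 < a \<and> a \<le> D_FAF Af \<rho> S E A"
proof
  assume D: "D_cond Af \<rho> S E A a"
  then have "0 < a" by (simp add: D_cond_def fpin_def)
  with D_cond_le_D_FAF[OF D] show "0 < a \<and> a \<le> D_FAF Af \<rho> S E A" by simp
next
  assume "0 < a \<and> a \<le> D_FAF Af \<rho> S E A"
  then show "D_cond Af \<rho> S E A a"
    by (meson D_cond_antimono D_cond_D_FAF assms less_le_trans)
qed

locale faf_extension =
  fixes Af :: "'a::finite \<Rightarrow> real" and \<rho> :: "'a \<Rightarrow> 'a \<Rightarrow> real" and E :: "'a \<Rightarrow> real"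
  assumes fuzzy_Af: "fuzzy_set Af" and \<rho>_bounds: "\<forall>x y. 0 \<le> \<rho> x y \<and> \<rho> x y \<le> 1"
    and fuzzy_E: "fuzzy_set E" and E_le_Af: "fsub E Af"
begin

abbreviation local_AE :: "('a \<Rightarrow> real) \<Rightarrow> ('a \<Rightarrow> real) \<Rightarrow> bool" where
  "local_AE S C \<equiv> finter E S \<in> AE (R_FAF Af \<rho> S E) (restrict_att \<rho> (R_FAF Af \<rho> S E))
                                   (finter (D_FAF Af \<rho> S E) C)"

lemma value_bounds:
  "0 \<le> Af x" "0 \<le> E x" "E x \<le> 1" "E x \<le> Af x" "0 \<le> \<rho> x y" "\<rho> x y \<le> 1"
  using fuzzy_Af \<rho>_bounds fuzzy_E E_le_Af by (auto simp: fuzzy_set_def fsub_def)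

lemma finter_E_outparents:
  "finter E (outparents Af \<rho> S) B = (if B \<notin> supp S \<and> (\<exists>A\<in>supp S. 0 < \<rho> B A) then E B else 0)"
  using value_bounds(2,4)[of B] by (simp add: finter_def outparents_def)

lemma L_FAF_le_1: "L_FAF Af \<rho> S E A \<le> 1"
proof (cases "A \<in> supp S")
  case True
  then obtain B where "L_FAF Af \<rho> S E A = min (finter E (outparents Af \<rho> S) B) (\<rho> B A)"
    using L_FAF_attained by blast
  then show ?thesis using value_bounds(6)[of B A] by linarith
qed (simp add: L_FAF_def)

lemma L_FAF_ge_outside:
  assumes "A \<in> supp S" and "B \<notin> supp S"
  shows "min (E B) (\<rho> B A) \<le> L_FAF Af \<rho> S E A"
proof -
  have "min (E B) (\<rho> B A) = min (finter E (outparents Af \<rho> S) B) (\<rho> B A)"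
    using assms value_bounds(2)[of B] value_bounds(5)[of B A]
    by (cases "0 < \<rho> B A") (auto simp: finter_E_outparents)
  then show ?thesis using L_FAF_ge[OF assms(1)] by simp
qed

lemma L_FAF_witness:
  assumes "A \<in> supp S" and "0 < L_FAF Af \<rho> S E A"
  shows "\<exists>B. B \<notin> supp S \<and> 0 < E B \<and> L_FAF Af \<rho> S E A = min (E B) (\<rho> B A)"
proof -
  obtain B where B: "L_FAF Af \<rho> S E A = min (finter E (outparents Af \<rho> S) B) (\<rho> B A)"
    using L_FAF_attained[OF assms(1)] by blast
  with assms(2) show ?thesis
    by (auto simp: finter_E_outparents split: if_splits)
qed

lemma R_FAF_le_Af: "R_FAF Af \<rho> S E A \<le> Af A"
  using value_bounds(1) by (simp add: R_FAF_def)

lemma R_FAF_nonneg: "0 \<le> R_FAF Af \<rho> S E A"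
  using value_bounds(1) L_FAF_le_1 by (simp add: R_FAF_def)

lemma R_FAF_le_outside:
  assumes "A \<in> supp S" and "B \<notin> supp S"
  shows "R_FAF Af \<rho> S E A \<le> 1 - min (E B) (\<rho> B A)"
  using L_FAF_ge_outside[OF assms] assms(1) by (simp add: R_FAF_def)

lemma not_sufficient_attack_from_outside:
  assumes "B \<notin> supp S" and "A \<in> supp S" and "b \<le> E B" and "a \<le> R_FAF Af \<rho> S E A"
  shows "\<not> sufficient_attack \<rho> B b A a"
  using R_FAF_le_outside[OF assms(2,1)] assms(3,4) by (auto simp: sufficient_attack_def)

lemma weaken_from_outside:
  assumes "A \<notin> supp S" and "B \<in> supp S" and "a \<le> E A" and "b \<le> R_FAF Af \<rho> S E B"
  shows "weaken \<rho> A a B b = b"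
  using R_FAF_le_outside[OF assms(2,1)] assms(3,4) by (auto simp: weaken_def)

lemma conflict_free_le_R_FAF:
  assumes cf: "conflict_free \<rho> E" and A: "A \<in> supp S"
  shows "E A \<le> R_FAF Af \<rho> S E A"
proof -
  have "E A \<le> 1 - L_FAF Af \<rho> S E A"
  proof (cases "0 < E A \<and> 0 < L_FAF Af \<rho> S E A")
    case True
    then obtain B where B: "B \<notin> supp S" "0 < E B" "L_FAF Af \<rho> S E A = min (E B) (\<rho> B A)"
      using L_FAF_witness A by blast
    have "\<not> sufficient_attack \<rho> B (E B) A (E A)"
      using cf B(2) True value_bounds(3) unfolding conflict_free_def fpin_def by blast
    then show ?thesis using B(3) True by (auto simp: sufficient_attack_def)
  next
    case False
    then show ?thesis using value_bounds(3)[of A] L_FAF_le_1[of S A] by auto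
  qed
  then show ?thesis using A value_bounds(4)[of A] by (simp add: R_FAF_def)
qed

lemma fsub_finter_R_FAF:
  assumes "conflict_free \<rho> E"
  shows "fsub (finter E S) (R_FAF Af \<rho> S E)"
  unfolding fsub_def
proof
  fix x
  show "finter E S x \<le> R_FAF Af \<rho> S E x"
  proof (cases "x \<in> supp S")
    case True
    then show ?thesis
      using conflict_free_le_R_FAF[OF assms True] by (simp add: finter_def min.coboundedI1)
  next
    case False
    then show ?thesis using R_FAF_nonneg[of S x] by (simp add: finter_def supp_def)
  qed
qed

lemma fpin_finter_crisp:
  assumes "crisp_restriction Af S"
  shows "fpin x a (finter E S) \<longleftrightarrow> fpin x a E \<and> x \<in> supp S"
proof -
  have "x \<in> supp S \<Longrightarrow> S x = Af x"
    using assms[unfolded crisp_restriction_def, rule_format, of x] by (auto simp: supp_def)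
  then show ?thesis
    using value_bounds(4)[of x] by (auto simp: fpin_def finter_def supp_def)
qed

lemma wdefends_restriction:
  assumes adm: "admissible Af \<rho> E" and S: "crisp_restriction Af S"
    and X: "fpin X x (finter E S)"
  shows "wdefends (R_FAF Af \<rho> S E) (restrict_att \<rho> (R_FAF Af \<rho> S E)) (finter E S) X x"
  unfolding wdefends_def
proof (intro allI impI)
  let ?R = "R_FAF Af \<rho> S E"
  fix B b
  assume B: "fpin B b ?R \<and> sufficient_attack (restrict_att \<rho> ?R) B b X x"
  then have att: "sufficient_attack \<rho> B b X x" and "B \<in> supp ?R" "X \<in> supp ?R"
    by (auto simp: sufficient_attack_restrict_att)
  then have "B \<in> supp S" using supp_R_FAF by blast
  have "fpin B b Af" using B R_FAF_le_Af[of S B] by (auto simp: fpin_def)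
  moreover have "fpin X x E" using X fpin_finter_crisp[OF S] by blast
  ultimately obtain A a where A: "fpin A a E" "tolerable_attack \<rho> B (weaken \<rho> A a B b) X x"
    using adm att unfolding admissible_def wdefends_def by blast
  \<comment> \<open>a defender outside S would already be accounted for in R(S,E), and so could not weaken B\<close>
  have "A \<in> supp S"
  proof (rule ccontr)
    assume "A \<notin> supp S"
    then have "weaken \<rho> A a B b = b"
      using weaken_from_outside \<open>B \<in> supp S\<close> A(1) B by (auto simp: fpin_def)
    then show False using A(2) att sufficient_attack_not_tolerable by metis
  qed
  then have A_loc: "fpin A a (finter E S)" using A(1) fpin_finter_crisp[OF S] by blast
  then have "A \<in> supp ?R"
    using fsub_finter_R_FAF adm fpin_fsub fpin_supp unfolding admissible_def by metis
  then have "tolerable_attack (restrict_att \<rho> ?R) B (weaken (restrict_att \<rho> ?R) A a B b) X x"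
    using A(2) \<open>B \<in> supp ?R\<close> \<open>X \<in> supp ?R\<close> by (simp add: tolerable_attack_def weaken_def)
  with A_loc show "\<exists>A a. fpin A a (finter E S) \<and>
      tolerable_attack (restrict_att \<rho> ?R) B (weaken (restrict_att \<rho> ?R) A a B b) X x"
    by blast
qed

lemma D_cond_of_admissible:
  assumes adm: "admissible Af \<rho> E" and "A \<in> supp S" and "0 < E A"
  shows "D_cond Af \<rho> S E A (E A)"
  unfolding D_cond_def
proof (intro conjI allI impI)
  have "E A \<le> R_FAF Af \<rho> S E A"
    using conflict_free_le_R_FAF adm assms(2) unfolding admissible_def by blast
  then show "fpin A (E A) (R_FAF Af \<rho> S E)"
    using assms(3) value_bounds(3) by (simp add: fpin_def)
next
  fix B b
  assume B: "fpin B b (outparents Af \<rho> S) \<and> sufficient_attack \<rho> B b A (E A)"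
  then have "fpin B b Af" by (auto simp: fpin_def outparents_def split: if_splits)
  moreover have "fpin A (E A) E" using assms(3) value_bounds(3) by (simp add: fpin_def)
  ultimately show "\<exists>C c. fpin C c E \<and> tolerable_attack \<rho> B (weaken \<rho> C c B b) A (E A)"
    using adm B unfolding admissible_def wdefends_def by blast
qed

lemma fsub_finter_D_FAF:
  assumes adm: "admissible Af \<rho> E" and "fsub E C" and "fuzzy_set C"
  shows "fsub (finter E S) (finter (D_FAF Af \<rho> S E) C)"
  unfolding fsub_def
proof
  fix x
  show "finter E S x \<le> finter (D_FAF Af \<rho> S E) C x"
  proof (cases "x \<in> supp S \<and> 0 < E x")
    case True
    then have "E x \<le> D_FAF Af \<rho> S E x"
      using D_cond_le_D_FAF D_cond_of_admissible[OF adm] by blast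
    moreover have "E x \<le> C x" using assms(2) by (simp add: fsub_def)
    ultimately show ?thesis by (simp add: finter_def min.coboundedI1)
  next
    case False
    then have "finter E S x \<le> 0"
      using value_bounds(2)[of x] by (auto simp: finter_def supp_def)
    moreover have "0 \<le> C x" using assms(3) by (simp add: fuzzy_set_def)
    ultimately show ?thesis using D_FAF_nonneg[of Af \<rho> S E x] by (simp add: finter_def)
  qed
qed

lemma local_AE_of_AE:
  assumes "E \<in> AE Af \<rho> C" and "fuzzy_set C" and S: "crisp_restriction Af S"
  shows "local_AE S C"
proof -
  have adm: "admissible Af \<rho> E" and "fsub E C" using assms(1) by (auto simp: AE_def)
  then have cf: "conflict_free \<rho> E" by (simp add: admissible_def)
  have "fsub (finter E S) E" by (simp add: fsub_def finter_def)
  then show ?thesis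
    using fsub_finter_R_FAF[OF cf] conflict_free_restrict_att[OF cf]
      wdefends_restriction[OF adm S] fsub_finter_D_FAF[OF adm \<open>fsub E C\<close> assms(2)]
    by (simp add: AE_def admissible_def)
qed

lemma defended_from_inside:
  assumes S: "crisp_restriction Af S"
    and H: "local_AE S C"
    and X: "X \<in> supp S" "fpin X x E" and B: "B \<in> supp S" "fpin B b Af"
    and att: "sufficient_attack \<rho> B b X x"
  shows "\<exists>A a. fpin A a E \<and> tolerable_attack \<rho> B (weaken \<rho> A a B b) X x"
proof -
  let ?R = "R_FAF Af \<rho> S E"
  let ?L = "L_FAF Af \<rho> S E"
  have fR: "fsub (finter E S) ?R"
    and wd: "\<And>X x. fpin X x (finter E S) \<Longrightarrow> wdefends ?R (restrict_att \<rho> ?R) (finter E S) X x"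
    using H by (auto simp: AE_def admissible_def)
  have X_loc: "fpin X x (finter E S)" using X fpin_finter_crisp[OF S] by blast
  then have "X \<in> supp ?R" using fR fpin_fsub fpin_supp by metis
  \<comment> \<open>inside the restricted framework B only carries the degree it keeps in R(S,E)\<close>
  define b' where "b' = min b (?R B)"
  show ?thesis
  proof (cases "sufficient_attack \<rho> B b' X x")
    case True
    then have "0 < b'"
      using X(2) by (auto simp: sufficient_attack_def fpin_def)
    then have "fpin B b' ?R" using B(2) by (auto simp: b'_def fpin_def)
    then have "B \<in> supp ?R" by (rule fpin_supp)
    with True \<open>X \<in> supp ?R\<close> have "sufficient_attack (restrict_att \<rho> ?R) B b' X x"
      by (simp add: sufficient_attack_restrict_att)
    then obtain A a where A: "fpin A a (finter E S)"
      "tolerable_attack (restrict_att \<rho> ?R) B (weaken (restrict_att \<rho> ?R) A a B b') X x"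
      using wd[OF X_loc] \<open>fpin B b' ?R\<close> unfolding wdefends_def by blast
    have "A \<in> supp ?R" using A(1) fR fpin_fsub fpin_supp by metis
    then have "tolerable_attack \<rho> B (weaken \<rho> A a B b') X x"
      using A(2) \<open>B \<in> supp ?R\<close> \<open>X \<in> supp ?R\<close> by (simp add: tolerable_attack_def weaken_def)
    from this True have "tolerable_attack \<rho> B (weaken \<rho> A a B b) X x"
      by (rule tolerable_attack_weaken_mono) (simp add: b'_def)
    moreover have "fpin A a E" using A(1) fpin_finter_crisp[OF S] by blast
    ultimately show ?thesis by blast
  next
    case False
    \<comment> \<open>then B lost degree to an out-parent B', which alone weakens it to a tolerable attack\<close>
    then have "b' < b" using att by (auto simp: b'_def min_def split: if_splits)
    then have b': "b' = 1 - ?L B" "0 < ?L B"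
      using B R_FAF_le_Af[of S B] by (auto simp: b'_def R_FAF_def fpin_def)
    then obtain B' where B': "B' \<notin> supp S" "0 < E B'" "?L B = min (E B') (\<rho> B' B)"
      using L_FAF_witness B(1) by blast
    have "weaken \<rho> B' (E B') B b = b'"
      using b' B' \<open>b' < b\<close> by (simp add: weaken_def)
    moreover have "fpin B' (E B') E" using B'(2) value_bounds(3) by (simp add: fpin_def)
    moreover have "tolerable_attack \<rho> B b' X x"
      using False att by (simp add: sufficient_attack_def tolerable_attack_def)
    ultimately show ?thesis by metis
  qed
qed

lemma defended_from_outside:
  assumes S: "crisp_restriction Af S"
    and H: "local_AE S C"
    and X: "X \<in> supp S" "fpin X x E" and B: "B \<notin> supp S" "fpin B b Af"
    and att: "sufficient_attack \<rho> B b X x"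
  shows "\<exists>A a. fpin A a E \<and> tolerable_attack \<rho> B (weaken \<rho> A a B b) X x"
proof -
  have "fpin X x (finter E S)" using X fpin_finter_crisp[OF S] by blast
  moreover have "fsub (finter E S) (finter (D_FAF Af \<rho> S E) C)"
    using H by (simp add: AE_def)
  ultimately have "0 < x" "x \<le> D_FAF Af \<rho> S E X"
    by (auto simp: fpin_def fsub_def finter_def dest: spec[of _ X])
  then have "D_cond Af \<rho> S E X x" using D_cond_iff[OF fuzzy_E] by blast
  moreover have "outparents Af \<rho> S B = Af B"
    using B(1) X(1) att by (auto simp: outparents_def sufficient_attack_def)
  then have "fpin B b (outparents Af \<rho> S)" using B(2) by (simp add: fpin_def)
  ultimately show ?thesis using att unfolding D_cond_def by blast
qed

lemma no_sufficient_attack_of_local_AE: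
  assumes S: "crisp_restriction Af S"
    and H: "local_AE S C"
    and A: "fpin A a E" and B: "B \<in> supp S" "fpin B b E"
  shows "\<not> sufficient_attack \<rho> A a B b"
proof
  assume att: "sufficient_attack \<rho> A a B b"
  let ?R = "R_FAF Af \<rho> S E"
  have fR: "fsub (finter E S) ?R" and cf: "conflict_free (restrict_att \<rho> ?R) (finter E S)"
    using H by (auto simp: AE_def admissible_def)
  have B_loc: "fpin B b (finter E S)" using B fpin_finter_crisp[OF S] by blast
  show False
  proof (cases "A \<in> supp S")
    case True
    then have A_loc: "fpin A a (finter E S)" using A fpin_finter_crisp[OF S] by blast
    have "A \<in> supp ?R" "B \<in> supp ?R" using A_loc B_loc fR fpin_fsub fpin_supp by metis+
    with att have "sufficient_attack (restrict_att \<rho> ?R) A a B b"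
      by (simp add: sufficient_attack_restrict_att)
    with cf A_loc B_loc show False unfolding conflict_free_def by blast
  next
    case False
    have "b \<le> ?R B" using fpin_fsub[OF B_loc fR] by (simp add: fpin_def)
    moreover have "a \<le> E A" using A by (simp add: fpin_def)
    ultimately show False
      using not_sufficient_attack_from_outside[OF False B(1)] att by blast
  qed
qed

lemma AE_of_local_AE:
  assumes cover: "\<And>x. 0 < Af x \<Longrightarrow> \<exists>S. crisp_restriction Af S \<and> x \<in> supp S \<and> local_AE S C"
    and "fuzzy_set C"
  shows "E \<in> AE Af \<rho> C"
proof -
  have cover_E: "\<exists>S. crisp_restriction Af S \<and> x \<in> supp S \<and> local_AE S C" if "0 < E x" for x
    using cover that value_bounds(4)[of x] by simp
  have "conflict_free \<rho> E"
    unfolding conflict_free_def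
  proof (intro allI impI)
    fix A a B b
    assume AB: "fpin A a E \<and> fpin B b E"
    then have "0 < E B" by (auto simp: fpin_def)
    then obtain S where "crisp_restriction Af S" "B \<in> supp S" "local_AE S C"
      using cover_E by blast
    with AB show "\<not> sufficient_attack \<rho> A a B b"
      using no_sufficient_attack_of_local_AE by blast
  qed
  moreover have "wdefends Af \<rho> E X x" if X: "fpin X x E" for X x
  proof -
    have "0 < E X" using X by (auto simp: fpin_def)
    then obtain S where "crisp_restriction Af S" "X \<in> supp S" "local_AE S C"
      using cover_E by blast
    then show ?thesis
      using defended_from_inside defended_from_outside X unfolding wdefends_def by blast
  qed
  moreover have "E x \<le> C x" for x
  proof (cases "0 < E x")
    case True
    then obtain S where S: "crisp_restriction Af S" "x \<in> supp S" and H: "local_AE S C"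
      using cover_E by blast
    have "fpin x (E x) E" using True value_bounds(3)[of x] by (simp add: fpin_def)
    then have "fpin x (E x) (finter E S)" using fpin_finter_crisp[OF S(1)] S(2) by blast
    moreover have "fsub (finter E S) (finter (D_FAF Af \<rho> S E) C)" using H by (simp add: AE_def)
    ultimately show ?thesis by (auto simp: fpin_def fsub_def finter_def dest: spec[of _ x])
  next
    case False
    then show ?thesis using \<open>fuzzy_set C\<close> value_bounds(2)[of x] by (simp add: fuzzy_set_def)
  qed
  ultimately show ?thesis using E_le_Af by (simp add: AE_def admissible_def fsub_def)
qed

end

theorem mainTheorem3:
  fixes Af :: "'a::finite \<Rightarrow> real" and \<rho> :: "'a \<Rightarrow> 'a \<Rightarrow> real"
    and E C :: "'a \<Rightarrow> real"
  assumes "fuzzy_set Af"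
    and "\<forall>x y. 0 \<le> \<rho> x y \<and> \<rho> x y \<le> 1"
    and "fuzzy_set E" and "fsub E Af"
    and "fuzzy_set C" and "fsub C Af"
  shows "E \<in> AE Af \<rho> C \<longleftrightarrow>
    (\<forall>S \<in> SCCS Af \<rho>.
       finter E S \<in> AE (R_FAF Af \<rho> S E) (restrict_att \<rho> (R_FAF Af \<rho> S E))
                       (finter (D_FAF Af \<rho> S E) C))"
proof -
  interpret faf_extension Af \<rho> E
    using assms(1-4) by unfold_locales
  show ?thesis
  proof
    assume "E \<in> AE Af \<rho> C"
    then show "\<forall>S \<in> SCCS Af \<rho>. local_AE S C"
      by (auto simp: SCCS_def intro: local_AE_of_AE[OF _ assms(5) crisp_restriction_SCC])
  next
    assume "\<forall>S \<in> SCCS Af \<rho>. local_AE S C"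
    then show "E \<in> AE Af \<rho> C"
      using AE_of_local_AE[OF _ assms(5)] crisp_restriction_SCC mem_supp_SCC_self
      by (metis SCCS_def rangeI)
  qed
qed

end
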